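(* Let $G$ be a finite group. If $\mathcal{C}$ is a cycle of $\mathcal{P}(G)$ with maximum length, then $\ell(\mathcal{C})\geq w_G+1$. Moreover, if equality holds, then for every path $\mathcal{W}=c_1,\dots,c_k$ in $\mathcal{P}^*(G)/\mathtt{N}$ of maximum $\mathtt{N}$-weight, and for every $i\in\{2,\dots,k-1\}$ with $|c_i|\geq2$, there is no vertex $y$ of $\mathcal{P}^*(G)/\mathtt{N}$ with $y\notin\{c_1,\dots,c_k\}$, $y$ equal or adjacent to $c_i$, and $|y|\geq2$.
   Context: The power graph $\mathcal{P}(G)$ has vertex set $G$, and distinct $x,y$ are adjacent iff one is a positive integer power of the other; $\mathcal{P}^*(G)$ is its subgraph induced on $G\setminus\{1\}$. $N[x]$ is the closed neighbourhood of $x$ in $\mathcal{P}(G)$, and $x\mathtt{N}y$ iff $N[x]=N[y]$. $\mathcal{P}^*(G)/\mathtt{N}$ is the quotient graph whose vertices are the $\mathtt{N}$-classes of elements of $G\setminus\{1\}$, two distinct classes being adjacent iff some element of one is adjacent in $\mathcal{P}^*(G)$ to some element of the other. A path is a sequence of distinct vertices with consecutive ones adjacent; a cycle is a cyclic such sequence of $k\ge3$ distinct vertices, with length $\ell$ its number of edges. The $\mathtt{N}$-weight of a path $\mathcal{W}$ in $\mathcal{P}^*(G)/\mathtt{N}$ is $w_{\mathtt{N}}(\mathcal{W})=\sum_{c\in V_{\mathcal{W}}}|c|$, and $w_G$ is the maximum $\mathtt{N}$-weight of a path in $\mathcal{P}^*(G)/\mathtt{N}$. *)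

theory Defs
  imports "HOL-Algebra.Group"
begin

definition pg_adj :: "('a, 'b) monoid_scheme \<Rightarrow> 'a \<Rightarrow> 'a \<Rightarrow> bool" where
  "pg_adj G x y \<longleftrightarrow> x \<in> carrier G \<and> y \<in> carrier G \<and> x \<noteq> y \<and>
     ((\<exists>n::nat. n \<ge> 1 \<and> y = x [^]\<^bsub>G\<^esub> n) \<or> (\<exists>n::nat. n \<ge> 1 \<and> x = y [^]\<^bsub>G\<^esub> n))"

definition closed_nbhd :: "('a, 'b) monoid_scheme \<Rightarrow> 'a \<Rightarrow> 'a set" where
  "closed_nbhd G x = insert x {y \<in> carrier G. pg_adj G x y}"

definition N_rel :: "('a, 'b) monoid_scheme \<Rightarrow> 'a \<Rightarrow> 'a \<Rightarrow> bool" where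
  "N_rel G x y \<longleftrightarrow> closed_nbhd G x = closed_nbhd G y"

definition N_class :: "('a, 'b) monoid_scheme \<Rightarrow> 'a \<Rightarrow> 'a set" where
  "N_class G x = {y \<in> carrier G - {\<one>\<^bsub>G\<^esub>}. N_rel G x y}"

definition quot_vertices :: "('a, 'b) monoid_scheme \<Rightarrow> 'a set set" where
  "quot_vertices G = N_class G ` (carrier G - {\<one>\<^bsub>G\<^esub>})"

definition quot_adj :: "('a, 'b) monoid_scheme \<Rightarrow> 'a set \<Rightarrow> 'a set \<Rightarrow> bool" where
  "quot_adj G c d \<longleftrightarrow> c \<in> quot_vertices G \<and> d \<in> quot_vertices G \<and> c \<noteq> d \<and>
     (\<exists>x\<in>c. \<exists>y\<in>d. pg_adj G x y)"

definition quot_path :: "('a, 'b) monoid_scheme \<Rightarrow> 'a set list \<Rightarrow> bool" where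
  "quot_path G W \<longleftrightarrow> set W \<subseteq> quot_vertices G \<and> distinct W \<and>
     (\<forall>i. Suc i < length W \<longrightarrow> quot_adj G (W ! i) (W ! Suc i))"

definition N_weight :: "'a set list \<Rightarrow> nat" where
  "N_weight W = (\<Sum>c\<in>set W. card c)"

definition w_G :: "('a, 'b) monoid_scheme \<Rightarrow> nat" where
  "w_G G = Max (N_weight ` {W. quot_path G W})"

(* a cycle of P(G): k \<ge> 3 distinct vertices, cyclically consecutive ones adjacent;
   its length (number of edges) is the length of the list *)
definition pg_cycle :: "('a, 'b) monoid_scheme \<Rightarrow> 'a list \<Rightarrow> bool" where
  "pg_cycle G C \<longleftrightarrow> length C \<ge> 3 \<and> set C \<subseteq> carrier G \<and> distinct C \<and>
     (\<forall>i < length C. pg_adj G (C ! i) (C ! ((i + 1) mod length C)))"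

end

theory Submission
  imports Defs "HOL-Algebra.Multiplicative_Group"
begin

(*
  Every N-class is a clique of the power graph, two adjacent N-classes are completely joined,
  and the identity is adjacent to every other element of a finite group.  Listing the elements
  of c_1, ..., c_k class by class therefore turns a path of P*(G)/N into a path of P*(G) of
  length w_N(W), which closes up through 1 into a cycle of length w_N(W) + 1; hence
  l(C) >= w_G + 1.  If a class c of a path of maximal N-weight contains two elements a, b and
  has a neighbour class y off the path, the elements of y can be spliced in between a and b,
  giving a cycle of length w_G + 1 + |y| > w_G + 1, so equality excludes such y.
*)

lemma successively_if_pairwise:
  assumes "distinct xs" "pairwise R (set xs)"
  shows "successively R xs"
  using assms
proof (induction xs)
  case (Cons x xs)
  then show ?case
    by (cases xs) (auto simp: successively_Cons pairwise_insert)
qed simp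

lemma successively_concat:
  assumes "\<forall>xs\<in>set xss. xs \<noteq> [] \<and> successively R xs"
    and "successively (\<lambda>xs ys. R (last xs) (hd ys)) xss"
  shows "successively R (concat xss)"
  using assms
proof (induction xss)
  case (Cons xs xss)
  then show ?case
    by (cases xss) (auto simp: successively_Cons successively_append_iff)
qed simp

lemma successively_insert:
  assumes "successively R (us @ a # b # vs)" "successively R ys" "ys \<noteq> []"
    and "R a (hd ys)" "R (last ys) b"
  shows "successively R (us @ a # ys @ b # vs)"
  using assms by (auto simp: successively_append_iff successively_Cons)

definition list_of_set :: "'a set \<Rightarrow> 'a list" where
  "list_of_set A = (SOME xs. set xs = A \<and> distinct xs)"

lemma
  assumes "finite A"
  shows set_list_of_set: "set (list_of_set A) = A"
    and distinct_list_of_set: "distinct (list_of_set A)"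
    and length_list_of_set: "length (list_of_set A) = card A"
proof -
  show "set (list_of_set A) = A" "distinct (list_of_set A)"
    using someI_ex[OF finite_distinct_list[OF assms]] unfolding list_of_set_def by auto
  then show "length (list_of_set A) = card A"
    using distinct_card by fastforce
qed

lemma pg_adj_sym: "pg_adj G x y \<Longrightarrow> pg_adj G y x"
  unfolding pg_adj_def by blast

lemma pg_adj_iff_in_closed_nbhd: "pg_adj G x y \<longleftrightarrow> x \<noteq> y \<and> y \<in> closed_nbhd G x"
  unfolding closed_nbhd_def pg_adj_def by blast

lemma pg_adj_one:
  assumes "group G" "finite (carrier G)" "x \<in> carrier G" "x \<noteq> \<one>\<^bsub>G\<^esub>"
  shows "pg_adj G \<one>\<^bsub>G\<^esub> x"
proof -
  have "group.ord G x \<ge> 1" "x [^]\<^bsub>G\<^esub> group.ord G x = \<one>\<^bsub>G\<^esub>"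
    using group.ord_ge_1[OF assms(1-3)] group.pow_ord_eq_1[OF assms(1,3)] by auto
  then show ?thesis
    using assms unfolding pg_adj_def by (metis group.is_monoid monoid.one_closed)
qed

lemma pg_cycleI:
  assumes "length C \<ge> 3" "set C \<subseteq> carrier G" "distinct C"
    and "successively (pg_adj G) C" "pg_adj G (last C) (hd C)"
  shows "pg_cycle G C"
  unfolding pg_cycle_def
proof (intro conjI allI impI)
  fix i assume i: "i < length C"
  show "pg_adj G (C ! i) (C ! ((i + 1) mod length C))"
  proof (cases "Suc i < length C")
    case True
    then show ?thesis using successively_nth[OF assms(4)] by simp
  next
    case False
    then have "i = length C - 1" "C \<noteq> []" using i by auto
    then show ?thesis using assms(5) by (simp add: last_conv_nth hd_conv_nth)
  qed
qed (use assms in auto)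

definition pg_star_path :: "('a, 'b) monoid_scheme \<Rightarrow> 'a list \<Rightarrow> bool" where
  "pg_star_path G xs \<longleftrightarrow>
     set xs \<subseteq> carrier G - {\<one>\<^bsub>G\<^esub>} \<and> distinct xs \<and> successively (pg_adj G) xs"

lemma pg_cycle_one_Cons:
  assumes "group G" "finite (carrier G)" "pg_star_path G xs" "length xs \<ge> 2"
  shows "pg_cycle G (\<one>\<^bsub>G\<^esub> # xs)"
proof (rule pg_cycleI)
  have xs: "set xs \<subseteq> carrier G - {\<one>\<^bsub>G\<^esub>}" "distinct xs" "successively (pg_adj G) xs"
    using assms(3) unfolding pg_star_path_def by auto
  have "xs \<noteq> []" using assms(4) by auto
  then have "pg_adj G \<one>\<^bsub>G\<^esub> (hd xs)" "pg_adj G \<one>\<^bsub>G\<^esub> (last xs)"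
    using pg_adj_one[OF assms(1,2)] xs(1) hd_in_set last_in_set by blast+
  then show "successively (pg_adj G) (\<one>\<^bsub>G\<^esub> # xs)"
    and "pg_adj G (last (\<one>\<^bsub>G\<^esub> # xs)) (hd (\<one>\<^bsub>G\<^esub> # xs))"
    using xs(3) \<open>xs \<noteq> []\<close> by (auto simp: successively_Cons pg_adj_sym)
  show "set (\<one>\<^bsub>G\<^esub> # xs) \<subseteq> carrier G" "distinct (\<one>\<^bsub>G\<^esub> # xs)"
    using xs(1,2) group.is_monoid[OF assms(1)] monoid.one_closed by fastforce+
qed (use assms(4) in simp)

lemma pg_star_path_length_less_max_cycle:
  assumes "group G" "finite (carrier G)" "pg_cycle G C"
    and "\<forall>D. pg_cycle G D \<longrightarrow> length D \<le> length C"
    and "pg_star_path G xs"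
  shows "length xs < length C"
proof (cases "length xs \<ge> 2")
  case True
  then show ?thesis using pg_cycle_one_Cons[OF assms(1,2,5)] assms(4) by force
next
  case False
  then show ?thesis using assms(3) unfolding pg_cycle_def by simp
qed

lemma quot_vertex_subset: "c \<in> quot_vertices G \<Longrightarrow> c \<subseteq> carrier G - {\<one>\<^bsub>G\<^esub>}"
  unfolding quot_vertices_def N_class_def by auto

lemma quot_vertex_nonempty: "c \<in> quot_vertices G \<Longrightarrow> c \<noteq> {}"
  unfolding quot_vertices_def N_class_def N_rel_def by auto

lemma quot_vertex_finite: "finite (carrier G) \<Longrightarrow> c \<in> quot_vertices G \<Longrightarrow> finite c"
  using quot_vertex_subset finite_subset by blast

lemma quot_vertex_closed_nbhd:
  "c \<in> quot_vertices G \<Longrightarrow> x \<in> c \<Longrightarrow> y \<in> c \<Longrightarrow> closed_nbhd G x = closed_nbhd G y"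
  unfolding quot_vertices_def N_class_def N_rel_def by auto

lemma quot_vertex_clique: "c \<in> quot_vertices G \<Longrightarrow> pairwise (pg_adj G) c"
  unfolding pairwise_def pg_adj_iff_in_closed_nbhd
  by (metis quot_vertex_closed_nbhd closed_nbhd_def insertI1)

lemma quot_vertices_disjoint:
  assumes "c \<in> quot_vertices G" "d \<in> quot_vertices G" "c \<noteq> d"
  shows "c \<inter> d = {}"
  using assms unfolding quot_vertices_def N_class_def N_rel_def by auto

lemma quot_adj_imp_pg_adj:
  assumes "quot_adj G c d" "x \<in> c" "y \<in> d"
  shows "pg_adj G x y"
proof -
  obtain x' y' where x'y': "x' \<in> c" "y' \<in> d" "pg_adj G x' y'"
    and c: "c \<in> quot_vertices G" and d: "d \<in> quot_vertices G" and "c \<inter> d = {}"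
    using assms(1) quot_vertices_disjoint unfolding quot_adj_def by metis
  then have "x \<noteq> y'" "y \<noteq> x" using assms(2,3) by auto
  have "pg_adj G x y'"
    using x'y' \<open>x \<noteq> y'\<close> quot_vertex_closed_nbhd[OF c x'y'(1) assms(2)]
    unfolding pg_adj_iff_in_closed_nbhd by simp
  then have "pg_adj G y x"
    using pg_adj_sym \<open>y \<noteq> x\<close> quot_vertex_closed_nbhd[OF d x'y'(2) assms(3)]
    unfolding pg_adj_iff_in_closed_nbhd by metis
  then show ?thesis by (rule pg_adj_sym)
qed

lemma quot_path_distinct: "quot_path G W \<Longrightarrow> distinct W"
  and quot_path_vertices: "quot_path G W \<Longrightarrow> set W \<subseteq> quot_vertices G"
  and quot_path_successively: "quot_path G W \<Longrightarrow> successively (quot_adj G) W"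
  unfolding quot_path_def successively_conv_nth by auto

lemma N_weight_eq_sum_list: "distinct W \<Longrightarrow> N_weight W = sum_list (map card W)"
  unfolding N_weight_def by (simp add: sum_list_distinct_conv_sum_set)

definition expand_path :: "'a set list \<Rightarrow> 'a list" where
  "expand_path W = concat (map list_of_set W)"

lemma expand_path_append: "expand_path (V @ c # W) = expand_path V @ list_of_set c @ expand_path W"
  unfolding expand_path_def by simp

lemma
  assumes "finite (carrier G)" "quot_path G W"
  shows set_expand_path: "set (expand_path W) = \<Union>(set W)"
    and length_expand_path: "length (expand_path W) = N_weight W"
proof -
  have fin: "\<forall>c\<in>set W. finite c"
    using quot_vertex_finite[OF assms(1)] quot_path_vertices[OF assms(2)] by blast
  then show "set (expand_path W) = \<Union>(set W)"
    unfolding expand_path_def by (simp add: set_list_of_set)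
  have "length (expand_path W) = sum_list (map card W)"
    unfolding expand_path_def length_concat map_map
    using fin by (auto intro!: arg_cong[of _ _ sum_list] simp: length_list_of_set)
  then show "length (expand_path W) = N_weight W"
    using N_weight_eq_sum_list[OF quot_path_distinct[OF assms(2)]] by simp
qed

lemma pg_star_path_expand_path:
  assumes "finite (carrier G)" "quot_path G W"
  shows "pg_star_path G (expand_path W)"
  unfolding pg_star_path_def
proof (intro conjI)
  have W: "set W \<subseteq> quot_vertices G" "distinct W" "successively (quot_adj G) W"
    using quot_path_vertices quot_path_distinct quot_path_successively assms(2) by auto
  have enum: "set (list_of_set c) = c" "distinct (list_of_set c)" if "c \<in> set W" for c
    using quot_vertex_finite[OF assms(1) subsetD[OF W(1) that]]
    by (simp_all add: set_list_of_set distinct_list_of_set)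
  show "set (expand_path W) \<subseteq> carrier G - {\<one>\<^bsub>G\<^esub>}"
    using set_expand_path[OF assms] W(1) quot_vertex_subset by blast
  show "distinct (expand_path W)"
    unfolding expand_path_def
  proof (rule distinct_concat)
    have "inj_on list_of_set (set W)"
      using enum(1) by (metis inj_onI)
    then show "distinct (map list_of_set W)"
      using W(2) by (simp add: distinct_map)
    show "distinct xs" if "xs \<in> set (map list_of_set W)" for xs
      using that enum(2) by auto
    show "set xs \<inter> set ys = {}"
      if "xs \<in> set (map list_of_set W)" "ys \<in> set (map list_of_set W)" "xs \<noteq> ys" for xs ys
      using that enum(1) W(1) quot_vertices_disjoint by fastforce
  qed
  show "successively (pg_adj G) (expand_path W)"
    unfolding expand_path_def
  proof (rule successively_concat)
    show "\<forall>xs\<in>set (map list_of_set W). xs \<noteq> [] \<and> successively (pg_adj G) xs"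
      using enum W(1) quot_vertex_nonempty quot_vertex_clique successively_if_pairwise by fastforce
    show "successively (\<lambda>xs ys. pg_adj G (last xs) (hd ys)) (map list_of_set W)"
      unfolding successively_map
    proof (rule successively_mono[OF W(3)])
      fix c d assume "quot_adj G c d" "c \<in> set W" "d \<in> set W"
      then show "pg_adj G (last (list_of_set c)) (hd (list_of_set d))"
        using enum W(1) quot_vertex_nonempty quot_adj_imp_pg_adj
        by (metis hd_in_set last_in_set set_empty2 subsetD)
    qed
  qed
qed

lemma pg_star_path_detour:
  assumes "finite (carrier G)" "quot_path G W" "c \<in> set W" "card c \<ge> 2"
    and "y \<in> quot_vertices G" "y \<notin> set W" "quot_adj G y c"
  shows "\<exists>xs. pg_star_path G xs \<and> length xs = N_weight W + card y"
proof -
  obtain V V' where W: "W = V @ c # V'" using split_list[OF assms(3)] by blast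
  have c: "c \<in> quot_vertices G" using assms(2,3) quot_path_vertices by blast
  have "length (list_of_set c) \<ge> 2"
    using length_list_of_set[OF quot_vertex_finite[OF assms(1) c]] assms(4) by simp
  then obtain a b cs where abcs: "list_of_set c = a # b # cs"
    by (auto simp: numeral_2_eq_2 Suc_le_length_iff)
  have "a \<in> c" "b \<in> c"
    using set_list_of_set[OF quot_vertex_finite[OF assms(1) c]] abcs by auto
  define ys where "ys = list_of_set y"
  have ys: "set ys = y" "distinct ys" "length ys = card y"
    using quot_vertex_finite[OF assms(1,5)] unfolding ys_def
    by (simp_all add: set_list_of_set distinct_list_of_set length_list_of_set)
  have "ys \<noteq> []" using ys(1) quot_vertex_nonempty[OF assms(5)] by auto
  have "y \<inter> d = {}" if "d \<in> set W" for d
    using that assms(6) quot_path_vertices[OF assms(2)] quot_vertices_disjoint[OF assms(5)] by auto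
  then have disj: "y \<inter> \<Union>(set W) = {}"
    by auto
  define xs where "xs = expand_path V @ a # ys @ b # cs @ expand_path V'"
  have path: "pg_star_path G (expand_path W)"
    by (rule pg_star_path_expand_path[OF assms(1,2)])
  have expand: "expand_path W = expand_path V @ a # b # cs @ expand_path V'"
    unfolding W expand_path_append abcs by simp
  have set_xs: "set xs = y \<union> set (expand_path W)"
    unfolding xs_def expand using ys(1) by auto
  have "y \<inter> set (expand_path W) = {}"
    using disj set_expand_path[OF assms(1,2)] by simp
  have "pg_star_path G xs"
    unfolding pg_star_path_def
  proof (intro conjI)
    show "set xs \<subseteq> carrier G - {\<one>\<^bsub>G\<^esub>}"
      using path quot_vertex_subset[OF assms(5)] unfolding set_xs pg_star_path_def by blast
    show "distinct xs"
      using path \<open>y \<inter> set (expand_path W) = {}\<close> ys(1,2)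
      unfolding xs_def expand pg_star_path_def by auto
    show "successively (pg_adj G) xs"
      unfolding xs_def
    proof (rule successively_insert)
      show "successively (pg_adj G) (expand_path V @ a # b # cs @ expand_path V')"
        using path expand unfolding pg_star_path_def by simp
      show "successively (pg_adj G) ys"
        using successively_if_pairwise ys quot_vertex_clique[OF assms(5)] by blast
      show "pg_adj G a (hd ys)" "pg_adj G (last ys) b"
        using quot_adj_imp_pg_adj[OF assms(7)] \<open>a \<in> c\<close> \<open>b \<in> c\<close> \<open>ys \<noteq> []\<close> ys(1) pg_adj_sym
        by (metis hd_in_set last_in_set)+
    qed (rule \<open>ys \<noteq> []\<close>)
  qed
  moreover have "length xs = N_weight W + card y"
    using length_expand_path[OF assms(1,2)] expand ys(3) unfolding xs_def by simp
  ultimately show ?thesis by blast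
qed

lemma finite_quot_paths:
  assumes "finite (carrier G)"
  shows "finite {W. quot_path G W}"
proof -
  have fin: "finite (quot_vertices G)" using assms unfolding quot_vertices_def by simp
  have "{W. quot_path G W} \<subseteq> {W. set W \<subseteq> quot_vertices G \<and> length W \<le> card (quot_vertices G)}"
    unfolding quot_path_def using fin by (auto simp: card_mono distinct_card[symmetric])
  then show ?thesis using finite_lists_length_le[OF fin] finite_subset by blast
qed

theorem mainTheorem5:
  fixes G :: "('a, 'b) monoid_scheme" and C :: "'a list"
  assumes "group G" and "finite (carrier G)"
    and "pg_cycle G C"
    and "\<forall>D. pg_cycle G D \<longrightarrow> length D \<le> length C"
  shows "length C \<ge> w_G G + 1 \<and>
    (length C = w_G G + 1 \<longrightarrow>
      (\<forall>W. quot_path G W \<and> N_weight W = w_G G \<longrightarrow>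
        (\<forall>i \<in> {2..length W - 1}. card (W ! (i - 1)) \<ge> 2 \<longrightarrow>
           \<not> (\<exists>y \<in> quot_vertices G. y \<notin> set W \<and>
                 (y = W ! (i - 1) \<or> quot_adj G y (W ! (i - 1))) \<and> card y \<ge> 2))))"
proof (intro conjI impI allI ballI notI)
  have weight_less: "N_weight W < length C" if "quot_path G W" for W
    using pg_star_path_length_less_max_cycle[OF assms pg_star_path_expand_path[OF assms(2) that]]
    unfolding length_expand_path[OF assms(2) that] .
  have "quot_path G []"
    unfolding quot_path_def by simp
  then have "w_G G \<in> N_weight ` {W. quot_path G W}"
    unfolding w_G_def using finite_quot_paths[OF assms(2)] by (intro Max_in) auto
  then show "w_G G + 1 \<le> length C"
    using weight_less by (auto simp: Suc_le_eq)
next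
  fix W i
  assume C: "length C = w_G G + 1" and W: "quot_path G W \<and> N_weight W = w_G G"
    and i: "i \<in> {2..length W - 1}" and c: "2 \<le> card (W ! (i - 1))"
    and "\<exists>y\<in>quot_vertices G. y \<notin> set W \<and> (y = W ! (i - 1) \<or> quot_adj G y (W ! (i - 1))) \<and> 2 \<le> card y"
  moreover have "W ! (i - 1) \<in> set W" using i by auto
  ultimately obtain y where y: "y \<in> quot_vertices G" "y \<notin> set W" "quot_adj G y (W ! (i - 1))"
    by metis
  obtain xs where "pg_star_path G xs" "length xs = N_weight W + card y"
    using pg_star_path_detour[OF assms(2) _ \<open>W ! (i - 1) \<in> set W\<close> c y] W by blast
  moreover have "card y > 0"
    using quot_vertex_nonempty[OF y(1)] quot_vertex_finite[OF assms(2) y(1)] by auto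
  ultimately show False
    using pg_star_path_length_less_max_cycle[OF assms] C W by fastforce
qed

end
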